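(* Let $(\mathbf{X}^0,\mathbf{p})$ be a pEF1 $\{1,k\}$-payment equilibrium. If $(\mathbf{X}^0,\mathbf{p})$ is not $(2-1/k)$-pEFX, then $\min_{i\in N_L}p(X^0_i)<k$.
   Context: Fix $k>1$. Agents $N$, chores $M$, additive costs $c_i(e)\in\{1,k\}$. An allocation partitions $M$ into bundles. A payment vector assigns $p(e)>0$, $p(X)=\sum_{e\in X}p(e)$; $\alpha_{i,e}=c_i(e)/p(e)$, $\alpha_i=\min_e\alpha_{i,e}$, $\mathsf{MPB}_i=\{e:\alpha_{i,e}=\alpha_i\}$; $(\mathbf{X},\mathbf{p})$ is a $\{1,k\}$-payment equilibrium if $X_i\subseteq\mathsf{MPB}_i$ for all $i$ and $p(e)\in\{1,k\}$ for all $e$. It is pEF1 if for all $i,j$, $X_i=\emptyset$ or some $e\in X_i$ has $p(X_i\setminus\{e\})\le p(X_j)$; it is $\beta$-pEFX if for all $i,j$, $X_i=\emptyset$ or $p(X_i\setminus\{e\})\le\beta\,p(X_j)$ for all $e\in X_i$. $L=\{e:p(e)=1\}$, $N_L=\{i:X^0_i\subseteq L\}$. *)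

theory Defs
  imports Complex_Main
begin

definition bivalued_instance :: "real \<Rightarrow> 'a set \<Rightarrow> 'b set \<Rightarrow> ('a \<Rightarrow> 'b \<Rightarrow> real) \<Rightarrow> bool" where
  "bivalued_instance k N M c \<longleftrightarrow> k > 1 \<and> finite N \<and> N \<noteq> {} \<and> finite M \<and>
     (\<forall>i\<in>N. \<forall>e\<in>M. c i e \<in> {1, k})"

definition is_allocation :: "'a set \<Rightarrow> 'b set \<Rightarrow> ('a \<Rightarrow> 'b set) \<Rightarrow> bool" where
  "is_allocation N M X \<longleftrightarrow> (\<forall>i\<in>N. X i \<subseteq> M) \<and> (\<Union>i\<in>N. X i) = M \<and>
     (\<forall>i\<in>N. \<forall>j\<in>N. i \<noteq> j \<longrightarrow> X i \<inter> X j = {})"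

definition pay :: "('b \<Rightarrow> real) \<Rightarrow> 'b set \<Rightarrow> real" where
  "pay p S = (\<Sum>e\<in>S. p e)"

definition alpha_ie :: "('a \<Rightarrow> 'b \<Rightarrow> real) \<Rightarrow> ('b \<Rightarrow> real) \<Rightarrow> 'a \<Rightarrow> 'b \<Rightarrow> real" where
  "alpha_ie c p i e = c i e / p e"

definition alpha_i :: "'b set \<Rightarrow> ('a \<Rightarrow> 'b \<Rightarrow> real) \<Rightarrow> ('b \<Rightarrow> real) \<Rightarrow> 'a \<Rightarrow> real" where
  "alpha_i M c p i = Min ((\<lambda>e. alpha_ie c p i e) ` M)"

definition MPB :: "'b set \<Rightarrow> ('a \<Rightarrow> 'b \<Rightarrow> real) \<Rightarrow> ('b \<Rightarrow> real) \<Rightarrow> 'a \<Rightarrow> 'b set" where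
  "MPB M c p i = {e\<in>M. alpha_ie c p i e = alpha_i M c p i}"

definition payment_equilibrium_1k ::
  "real \<Rightarrow> 'a set \<Rightarrow> 'b set \<Rightarrow> ('a \<Rightarrow> 'b \<Rightarrow> real) \<Rightarrow> ('a \<Rightarrow> 'b set) \<Rightarrow> ('b \<Rightarrow> real) \<Rightarrow> bool" where
  "payment_equilibrium_1k k N M c X p \<longleftrightarrow> is_allocation N M X \<and>
     (\<forall>e\<in>M. p e > 0 \<and> p e \<in> {1, k}) \<and>
     (\<forall>i\<in>N. X i \<subseteq> MPB M c p i)"

definition pEF1 :: "'a set \<Rightarrow> ('a \<Rightarrow> 'b set) \<Rightarrow> ('b \<Rightarrow> real) \<Rightarrow> bool" where
  "pEF1 N X p \<longleftrightarrow> (\<forall>i\<in>N. \<forall>j\<in>N. X i = {} \<or>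
      (\<exists>e\<in>X i. pay p (X i - {e}) \<le> pay p (X j)))"

definition pEFX :: "real \<Rightarrow> 'a set \<Rightarrow> ('a \<Rightarrow> 'b set) \<Rightarrow> ('b \<Rightarrow> real) \<Rightarrow> bool" where
  "pEFX \<beta> N X p \<longleftrightarrow> (\<forall>i\<in>N. \<forall>j\<in>N. X i = {} \<or>
      (\<forall>e\<in>X i. pay p (X i - {e}) \<le> \<beta> * pay p (X j)))"

definition low_chores :: "'b set \<Rightarrow> ('b \<Rightarrow> real) \<Rightarrow> 'b set" where
  "low_chores M p = {e\<in>M. p e = 1}"

definition N_L :: "'a set \<Rightarrow> 'b set \<Rightarrow> ('a \<Rightarrow> 'b set) \<Rightarrow> ('b \<Rightarrow> real) \<Rightarrow> 'a set" where
  "N_L N M X p = {i\<in>N. X i \<subseteq> low_chores M p}"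

end

theory Submission
  imports Defs
begin

text \<open>A violation of \<open>(2 - 1/k)\<close>-pEFX between agents \<open>i\<close> and \<open>j\<close>, together with pEF1 for the same
  pair, squeezes \<open>p(X\<^sub>i)\<close> between \<open>(2 - 1/k) p(X\<^sub>j) + p(e)\<close> and \<open>p(X\<^sub>j) + k\<close>. This forces the
  removed chore \<open>e\<close> to be a low chore and then \<open>p(X\<^sub>j) < k\<close>. A bundle paid less than \<open>k\<close> cannot
  contain a chore of payment \<open>k\<close>, so \<open>j \<in> N\<^sub>L\<close>. Only the payments enter the argument.\<close>

lemma pay_remove:
  assumes "finite S" "e \<in> S"
  shows "pay p (S - {e}) = pay p S - p e"
  using assms by (simp add: pay_def sum_diff1)

lemma pay_nonneg:
  assumes "\<forall>e\<in>S. p e \<ge> 0"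
  shows "pay p S \<ge> 0"
  using assms by (simp add: pay_def sum_nonneg)

lemma member_le_pay:
  assumes "finite S" "\<forall>e\<in>S. p e \<ge> 0" "e \<in> S"
  shows "p e \<le> pay p S"
  using assms unfolding pay_def by (intro member_le_sum) auto

lemma pEFX_violation_squeeze:
  fixes k P q a b :: real
  assumes k: "k > 1" and q: "q \<ge> 0" and a: "a \<in> {1, k}" and b: "b \<le> k"
    and violation: "P - a > (2 - 1 / k) * q"
    and ef1: "P - b \<le> q"
  shows "a = 1" and "q < k"
proof -
  have "q / k \<le> q"
    using k q by (simp add: divide_le_eq mult_le_cancel_left1)
  then have "q \<le> (2 - 1 / k) * q"
    by (simp add: algebra_simps)
  then show a1: "a = 1"
    using a b violation ef1 by auto
  have "(2 - 1 / k) * q = 2 * q - q / k"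
    by (simp add: algebra_simps)
  then have "q - q / k < k - 1"
    using a1 b violation ef1 by linarith
  moreover have "(k - 1) * (q / k) = q - q / k"
    using k by (simp add: field_simps)
  ultimately have "(k - 1) * (q / k) < k - 1"
    by simp
  then have "q / k < 1"
    using k mult_less_cancel_left_pos[of "k - 1" "q / k" 1] by simp
  then show "q < k"
    using k by (simp add: divide_less_eq)
qed

lemma subset_low_chores_if_pay_less:
  assumes "finite S" "S \<subseteq> M" "\<forall>e\<in>M. p e \<in> {1, k}" "k > 1" "pay p S < k"
  shows "S \<subseteq> low_chores M p"
proof
  fix e assume e: "e \<in> S"
  have "\<forall>e\<in>S. p e \<ge> 0"
    using assms(2-4) by fastforce
  then have "p e < k"
    using member_le_pay[OF assms(1) _ e] assms(5) by fastforce
  then show "e \<in> low_chores M p"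
    using e assms(2,3) unfolding low_chores_def by auto
qed

lemma cheap_bundle_if_not_pEFX:
  assumes inst: "bivalued_instance k N M c"
    and eq: "payment_equilibrium_1k k N M c X p"
    and ef1: "pEF1 N X p"
    and not_efx: "\<not> pEFX (2 - 1 / k) N X p"
  obtains j where "j \<in> N" "pay p (X j) < k"
proof -
  have k: "k > 1" and "finite M"
    using inst unfolding bivalued_instance_def by auto
  have bundle_sub: "X i \<subseteq> M" "finite (X i)" if "i \<in> N" for i
    using eq that \<open>finite M\<close> finite_subset
    unfolding payment_equilibrium_1k_def is_allocation_def by auto
  have pay_1k: "p e \<in> {1, k}" if "e \<in> M" for e
    using eq that unfolding payment_equilibrium_1k_def by auto
  obtain i j e where ij: "i \<in> N" "j \<in> N" and e: "e \<in> X i"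
    and violation: "pay p (X i - {e}) > (2 - 1 / k) * pay p (X j)"
    using not_efx unfolding pEFX_def by force
  obtain e' where e': "e' \<in> X i" "pay p (X i - {e'}) \<le> pay p (X j)"
    using ef1 ij e unfolding pEF1_def by blast
  have "pay p (X j) \<ge> 0"
    using bundle_sub(1)[OF ij(2)] pay_1k k by (intro pay_nonneg) fastforce
  moreover have "p e' \<le> k"
    using pay_1k bundle_sub(1)[OF ij(1)] e'(1) k by fastforce
  moreover have "pay p (X i) - p e > (2 - 1 / k) * pay p (X j)"
    using violation pay_remove[OF bundle_sub(2)[OF ij(1)] e] by simp
  moreover have "pay p (X i) - p e' \<le> pay p (X j)"
    using e' pay_remove[OF bundle_sub(2)[OF ij(1)] e'(1)] by simp
  ultimately have "pay p (X j) < k"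
    using pEFX_violation_squeeze(2)[OF k _ pay_1k] bundle_sub(1)[OF ij(1)] e by blast
  with ij(2) show thesis ..
qed

theorem lemma8:
  fixes k :: real and N :: "'a set" and M :: "'b set"
    and c :: "'a \<Rightarrow> 'b \<Rightarrow> real" and X :: "'a \<Rightarrow> 'b set" and p :: "'b \<Rightarrow> real"
  assumes "bivalued_instance k N M c"
    and "payment_equilibrium_1k k N M c X p"
    and "pEF1 N X p"
    and "\<not> pEFX (2 - 1 / k) N X p"
  shows "N_L N M X p \<noteq> {} \<and> Min ((\<lambda>i. pay p (X i)) ` N_L N M X p) < k"
proof -
  obtain j where j: "j \<in> N" "pay p (X j) < k"
    using cheap_bundle_if_not_pEFX[OF assms] .
  have "k > 1" "finite N" "finite M"
    using assms(1) unfolding bivalued_instance_def by auto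
  moreover have "X j \<subseteq> M" "\<forall>e\<in>M. p e \<in> {1, k}"
    using assms(2) j(1) unfolding payment_equilibrium_1k_def is_allocation_def by auto
  ultimately have "j \<in> N_L N M X p"
    using j subset_low_chores_if_pay_less[of "X j" M p k] finite_subset
    unfolding N_L_def by blast
  moreover have "finite (N_L N M X p)"
    using \<open>finite N\<close> unfolding N_L_def by simp
  ultimately have "Min ((\<lambda>i. pay p (X i)) ` N_L N M X p) \<le> pay p (X j)"
    by (intro Min_le) auto
  with j(2) \<open>j \<in> N_L N M X p\<close> show ?thesis
    by auto
qed

end
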